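(* The set operad $\mathcal{C}om\mathcal{T}rias=(\mathcal{C}om\mathcal{T}rias_n)_{n\ge1}$, with $\mathcal{C}om\mathcal{T}rias_n=\{e^n_J\mid \emptyset\neq J\subset[n]\}$, $\mathbb{S}_n$ acting through its action on subsets of $[n]$, and composition $\mu(e^k_J;e^{i_1}_{J_1},\dots,e^{i_k}_{J_k})=e^{i_1+\cdots+i_k}_{\bar J}$ with $\bar J=\bigcup_{j\in J}\{i_1+\cdots+i_{j-1}+a\mid a\in J_j\}$, is a basic-set operad.
   Context: A set operad is basic-set if for all $\nu_1\in P_{i_1},\dots,\nu_t\in P_{i_t}$ the map $P_t\to P_{i_1+\cdots+i_t}$, $\nu\mapsto\mu(\nu;\nu_1,\dots,\nu_t)$ is injective. *)

theory Defs
  imports Main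
begin

definition ComTrias :: "nat \<Rightarrow> nat set set" where
  "ComTrias n = {J. J \<noteq> {} \<and> J \<subseteq> {1..n}}"

text \<open>Arities and inputs are given as functions on the 1-based index set {1..k}.\<close>
definition ComTrias_comp :: "nat set \<Rightarrow> (nat \<Rightarrow> nat) \<Rightarrow> (nat \<Rightarrow> nat set) \<Rightarrow> nat set" where
  "ComTrias_comp J ar Js = (\<Union>j\<in>J. (\<lambda>a. (\<Sum>l\<in>{1..<j}. ar l) + a) ` Js j)"

definition ComTrias_basic_set :: bool where
  "ComTrias_basic_set \<longleftrightarrow>
     (\<forall>t ar Js. (\<forall>j\<in>{1..t}. Js j \<in> ComTrias (ar j)) \<longrightarrow>
        ((\<lambda>J. ComTrias_comp J ar Js) ` ComTrias t \<subseteq> ComTrias (\<Sum>j\<in>{1..t}. ar j)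
         \<and> inj_on (\<lambda>J. ComTrias_comp J ar Js) (ComTrias t)))"

end

theory Submission
  imports Defs
begin

text \<open>The composite places the block of the j-th input right after the blocks of inputs
  1, ..., j-1, so every position of the composite lies in exactly one block.  An element of
  the composite therefore tells which input it came from, and since every input is nonempty,
  the set of inputs that occur recovers the outer operation J.\<close>

abbreviation block_offset :: "(nat \<Rightarrow> nat) \<Rightarrow> nat \<Rightarrow> nat" where
  "block_offset ar j \<equiv> \<Sum>l\<in>{1..<j}. ar l"

lemma block_offset_add_le:
  assumes "1 \<le> j" "j < j'"
  shows "block_offset ar j + ar j \<le> block_offset ar j'"
proof -
  have "block_offset ar j + ar j = (\<Sum>l\<in>{1..<Suc j}. ar l)"
    using assms by (simp add: sum.atLeastLessThan_Suc)
  also have "\<dots> \<le> block_offset ar j'"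
    using assms by (intro sum_mono2) auto
  finally show ?thesis .
qed

lemma block_offset_add_le_sum:
  assumes "j \<in> {1..t}"
  shows "block_offset ar j + ar j \<le> (\<Sum>l\<in>{1..t}. ar l)"
  using block_offset_add_le[of j "Suc t" ar] assms by (simp add: atLeastLessThanSuc_atLeastAtMost)

lemma block_offset_add_inj:
  assumes "1 \<le> j" "1 \<le> j'" "a \<in> {1..ar j}" "a' \<in> {1..ar j'}"
    and "block_offset ar j + a = block_offset ar j' + a'"
  shows "j = j'" "a = a'"
proof -
  show "j = j'"
  proof (rule ccontr)
    assume "j \<noteq> j'"
    then consider "j < j'" | "j' < j" by linarith
    then show False
      using assms block_offset_add_le[of j j' ar] block_offset_add_le[of j' j ar] by cases auto
  qed
  then show "a = a'" using assms(5) by simp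
qed

lemma mem_ComTrias_comp_block_iff:
  assumes "J \<subseteq> {1..t}" "j \<in> {1..t}" "a \<in> {1..ar j}"
    and blocks: "\<And>i. i \<in> {1..t} \<Longrightarrow> Js i \<subseteq> {1..ar i}"
  shows "block_offset ar j + a \<in> ComTrias_comp J ar Js \<longleftrightarrow> j \<in> J \<and> a \<in> Js j"
proof
  assume "block_offset ar j + a \<in> ComTrias_comp J ar Js"
  then obtain i b where "i \<in> J" "b \<in> Js i" and eq: "block_offset ar j + a = block_offset ar i + b"
    unfolding ComTrias_comp_def by blast
  moreover have "b \<in> {1..ar i}" using \<open>i \<in> J\<close> \<open>b \<in> Js i\<close> assms(1) blocks by blast
  ultimately show "j \<in> J \<and> a \<in> Js j"
    using block_offset_add_inj[OF _ _ _ _ eq] assms(1-3) by fastforce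
qed (auto simp: ComTrias_comp_def)

lemma ComTrias_comp_in_ComTrias:
  assumes "J \<in> ComTrias t" and inputs: "\<And>j. j \<in> {1..t} \<Longrightarrow> Js j \<in> ComTrias (ar j)"
  shows "ComTrias_comp J ar Js \<in> ComTrias (\<Sum>j\<in>{1..t}. ar j)"
proof -
  from assms obtain j a where "j \<in> J" "a \<in> Js j"
    by (fastforce simp: ComTrias_def)
  then have "ComTrias_comp J ar Js \<noteq> {}" by (auto simp: ComTrias_comp_def)
  moreover have "ComTrias_comp J ar Js \<subseteq> {1..(\<Sum>j\<in>{1..t}. ar j)}"
  proof
    fix x assume "x \<in> ComTrias_comp J ar Js"
    then obtain j a where "j \<in> J" "a \<in> Js j" "x = block_offset ar j + a"
      unfolding ComTrias_comp_def by blast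
    moreover have "j \<in> {1..t}" "a \<in> {1..ar j}"
      using \<open>j \<in> J\<close> \<open>a \<in> Js j\<close> assms by (auto simp: ComTrias_def subset_iff)
    ultimately show "x \<in> {1..(\<Sum>j\<in>{1..t}. ar j)}"
      using block_offset_add_le_sum[of j t ar] by auto
  qed
  ultimately show ?thesis by (simp add: ComTrias_def)
qed

lemma ComTrias_comp_recovers_outer:
  assumes "J \<in> ComTrias t" and inputs: "\<And>j. j \<in> {1..t} \<Longrightarrow> Js j \<in> ComTrias (ar j)"
  shows "J = {j \<in> {1..t}. \<exists>a\<in>Js j. block_offset ar j + a \<in> ComTrias_comp J ar Js}"
proof -
  have "J \<subseteq> {1..t}" using assms(1) by (simp add: ComTrias_def)
  moreover have "\<And>j. j \<in> {1..t} \<Longrightarrow> Js j \<noteq> {} \<and> Js j \<subseteq> {1..ar j}"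
    using inputs by (simp add: ComTrias_def)
  ultimately show ?thesis
    using mem_ComTrias_comp_block_iff[of J t _ _ ar Js] by blast
qed

theorem mainTheorem7:
  shows "ComTrias_basic_set"
  unfolding ComTrias_basic_set_def
proof (intro allI impI conjI)
  fix t and ar :: "nat \<Rightarrow> nat" and Js
  assume "\<forall>j\<in>{1..t}. Js j \<in> ComTrias (ar j)"
  then have inputs: "\<And>j. j \<in> {1..t} \<Longrightarrow> Js j \<in> ComTrias (ar j)" by blast
  show "(\<lambda>J. ComTrias_comp J ar Js) ` ComTrias t \<subseteq> ComTrias (\<Sum>j\<in>{1..t}. ar j)"
    using ComTrias_comp_in_ComTrias[where t = t and ar = ar and Js = Js] inputs by blast
  show "inj_on (\<lambda>J. ComTrias_comp J ar Js) (ComTrias t)"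
    by (rule inj_on_inverseI[where g = "\<lambda>X. {j \<in> {1..t}. \<exists>a\<in>Js j. block_offset ar j + a \<in> X}"])
      (use ComTrias_comp_recovers_outer[where t = t and ar = ar and Js = Js] inputs in blast)
qed

end
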